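(* Let $n\ge 3$ be an odd integer. Then $$\sum_{k=1}^{\frac{n-1}{2}} (-1)^{k+1}\frac{\sin\frac{2k\pi}{n}}{\sin\frac{k\pi}{n}} = 1$$ and $$\sum_{k=1}^{\frac{n-1}{2}} (-1)^{k+1}\frac{\sin\frac{k\pi}{n}}{\sin\frac{2k\pi}{n}} = (-1)^{\frac{n+1}{2}}\left(\frac{n-1}{4}\right) + \frac{\chi_o\left(\frac{n-1}{2}\right)}{2},$$ where $\chi_o(m)=1$ if $m$ is odd and $\chi_o(m)=0$ if $m$ is even. *)

theory Defs
  imports Complex_Main
begin

definition chi_o :: "nat \<Rightarrow> real" where
  "chi_o m = (if odd m then 1 else 0)"

end

theory Submission imports Defs begin

text \<open>Put \<open>\<theta> = \<pi>/n\<close> with \<open>n = 2m + 1\<close>. Both sums are expressed through the kernel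
  \<open>K\<^sub>m(a) = 1 + 2 \<Sum>\<^sub>l\<^sub>=\<^sub>1\<^sup>m (-1)\<^sup>l cos (2la)\<close>, which telescopes to
  \<open>cos a \<cdot> K\<^sub>m(a) = (-1)\<^sup>m cos ((2m+1)a)\<close>. Since \<open>sin 2k\<theta> / sin k\<theta> = 2 cos k\<theta>\<close>, the first
  sum is \<open>1 - K\<^sub>m(\<theta>/2)\<close>, and \<open>K\<^sub>m(\<theta>/2) = 0\<close> because \<open>cos (n\<theta>/2) = 0\<close>. In the second sum,
  \<open>sin k\<theta> / sin 2k\<theta> = 1 / (2 cos k\<theta>) = (-1)\<^sup>m\<^sup>+\<^sup>k K\<^sub>m(k\<theta>) / 2\<close> because \<open>cos (nk\<theta>) = (-1)\<^sup>k\<close>;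
  exchanging the order of summation in \<open>\<Sum>\<^sub>k K\<^sub>m(k\<theta>)\<close> leaves the sums
  \<open>\<Sum>\<^sub>k\<^sub>=\<^sub>1\<^sup>m cos (2lk\<theta>)\<close>, which equal \<open>-1/2\<close> by Lagrange's identity for the Dirichlet kernel.\<close>

definition alternating_cos_kernel :: "nat \<Rightarrow> real \<Rightarrow> real" where
  "alternating_cos_kernel m a = 1 + 2 * (\<Sum>l=1..m. (-1)^l * cos (2 * real l * a))"

lemma cos_mult_alternating_cos_kernel:
  "cos a * alternating_cos_kernel m a = (-1)^m * cos ((2 * real m + 1) * a)"
proof (induction m)
  case 0
  then show ?case by (simp add: alternating_cos_kernel_def)
next
  case (Suc m)
  have "2 * cos (2 * real (Suc m) * a) * cos a
      = cos (2 * real (Suc m) * a + a) + cos (2 * real (Suc m) * a - a)"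
    by (simp add: cos_add cos_diff)
  also have "\<dots> = cos ((2 * real m + 3) * a) + cos ((2 * real m + 1) * a)"
    by (simp add: algebra_simps)
  finally have product_to_sum: "2 * cos (2 * real (Suc m) * a) * cos a = \<dots>" .
  have "cos a * alternating_cos_kernel (Suc m) a
      = cos a * alternating_cos_kernel m a - (-1)^m * (2 * cos (2 * real (Suc m) * a) * cos a)"
    by (simp add: alternating_cos_kernel_def algebra_simps)
  also have "\<dots> = (-1)^Suc m * cos ((2 * real (Suc m) + 1) * a)"
    unfolding Suc product_to_sum by (simp add: algebra_simps)
  finally show ?case .
qed

lemma sin_half_mult_sum_cos:
  "2 * sin (t / 2) * (\<Sum>k=1..m. cos (real k * t)) = sin ((2 * real m + 1) * t / 2) - sin (t / 2)"
proof (induction m)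
  case 0
  then show ?case by simp
next
  case (Suc m)
  have "2 * sin (t / 2) * cos (real (Suc m) * t)
      = sin (real (Suc m) * t + t / 2) - sin (real (Suc m) * t - t / 2)"
    by (simp add: sin_add sin_diff)
  also have "\<dots> = sin ((2 * real (Suc m) + 1) * t / 2) - sin ((2 * real m + 1) * t / 2)"
    by (simp add: algebra_simps add_divide_distrib)
  finally show ?case
    using Suc by (simp add: algebra_simps)
qed

lemma sum_cos_multiple_pi_div_odd:
  assumes "0 < l" "l < 2 * m + 1"
  shows "(\<Sum>k=1..m. cos (real k * (2 * real l * pi / (2 * real m + 1)))) = -1/2"
proof -
  define t where "t = 2 * real l * pi / (2 * real m + 1)"
  have "real l * pi < (2 * real m + 1) * pi"
    using assms by simp
  then have "0 < t / 2" "t / 2 < pi"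
    using assms by (simp_all add: t_def field_simps)
  then have sin_pos: "sin (t / 2) > 0"
    by (rule sin_gt_zero)
  have "sin ((2 * real m + 1) * t / 2) = 0"
    by (simp add: t_def)
  then have "sin (t / 2) * (2 * (\<Sum>k=1..m. cos (real k * t)) + 1) = 0"
    using sin_half_mult_sum_cos[of t m] by (simp add: algebra_simps)
  with sin_pos show ?thesis
    unfolding t_def[symmetric] by simp
qed

lemma sum_minus_one_power: "(\<Sum>l=1..m. (-1::real)^l) = - chi_o m"
  by (induction m) (auto simp: chi_o_def)

lemma sin_cos_multiple_pi_div_odd_pos:
  assumes "1 \<le> k" "k \<le> m"
  shows "0 < sin (real k * pi / (2 * real m + 1))" "0 < cos (real k * pi / (2 * real m + 1))"
proof -
  define x where "x = real k * pi / (2 * real m + 1)"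
  have "2 * real k * pi < (2 * real m + 1) * pi"
    using assms by simp
  then have "x < pi / 2"
    by (simp add: x_def field_simps)
  moreover have "0 < x"
    using assms by (simp add: x_def)
  ultimately have "0 < sin x" "0 < cos x"
    using pi_gt_zero by (auto intro!: sin_gt_zero cos_gt_zero)
  then show "0 < sin (real k * pi / (2 * real m + 1))" "0 < cos (real k * pi / (2 * real m + 1))"
    by (simp_all add: x_def)
qed

lemma alternating_sum_sin_double_div_sin:
  assumes "m \<ge> 1"
  shows "(\<Sum>k=1..m. (-1::real)^(k+1) * (sin (2 * real k * pi / (2 * real m + 1)) / sin (real k * pi / (2 * real m + 1)))) = 1"
proof -
  define \<theta> where "\<theta> = pi / (2 * real m + 1)"
  have "sin (2 * real k * pi / (2 * real m + 1)) / sin (real k * pi / (2 * real m + 1)) = 2 * cos (real k * \<theta>)"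
    if "k \<in> {1..m}" for k
  proof -
    have "sin (real k * \<theta>) > 0"
      using sin_cos_multiple_pi_div_odd_pos[of k m] that by (simp add: \<theta>_def)
    then show ?thesis
      using sin_double[of "real k * \<theta>"] by (simp add: \<theta>_def mult.assoc)
  qed
  then have "(\<Sum>k=1..m. (-1::real)^(k+1) * (sin (2 * real k * pi / (2 * real m + 1)) / sin (real k * pi / (2 * real m + 1))))
      = 1 - alternating_cos_kernel m (\<theta> / 2)"
    by (simp add: alternating_cos_kernel_def sum_distrib_left sum_negf[symmetric] mult.left_commute)
  moreover have "cos (\<theta> / 2) > 0"
    using assms by (intro cos_gt_zero) (simp_all add: \<theta>_def field_simps)
  moreover have "(2 * real m + 1) * (\<theta> / 2) = pi / 2"
    by (simp add: \<theta>_def field_simps)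
  ultimately show ?thesis
    using cos_mult_alternating_cos_kernel[of "\<theta> / 2" m] by simp
qed

lemma sum_alternating_cos_kernel_multiples:
  "(\<Sum>k=1..m. alternating_cos_kernel m (real k * pi / (2 * real m + 1))) = real m + chi_o m"
proof -
  have "(\<Sum>k=1..m. alternating_cos_kernel m (real k * pi / (2 * real m + 1)))
      = real m + 2 * (\<Sum>k=1..m. \<Sum>l=1..m. (-1)^l * cos (2 * real l * (real k * pi / (2 * real m + 1))))"
    unfolding alternating_cos_kernel_def by (simp add: sum.distrib sum_distrib_left)
  also have "\<dots> = real m + 2 * (\<Sum>l=1..m. (-1)^l * (\<Sum>k=1..m. cos (real k * (2 * real l * pi / (2 * real m + 1)))))"
    by (subst sum.swap) (simp add: sum_distrib_left mult_ac)
  also have "\<dots> = real m + 2 * (\<Sum>l=1..m. (-1)^l * (-1/2))"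
    by (intro arg_cong[where f="\<lambda>s. real m + 2 * s"] sum.cong refl, subst sum_cos_multiple_pi_div_odd) auto
  also have "\<dots> = real m + chi_o m"
    using sum_minus_one_power[of m] by (simp add: sum_negf flip: sum_divide_distrib)
  finally show ?thesis .
qed

lemma alternating_sum_sin_div_sin_double:
  "(\<Sum>k=1..m. (-1::real)^(k+1) * (sin (real k * pi / (2 * real m + 1)) / sin (2 * real k * pi / (2 * real m + 1))))
     = (-1)^(m+1) * (real m / 2) + chi_o m / 2"
proof -
  define \<theta> where "\<theta> = pi / (2 * real m + 1)"
  have "(-1::real)^(k+1) * (sin (real k * pi / (2 * real m + 1)) / sin (2 * real k * pi / (2 * real m + 1)))
      = (-1)^(m+1) * alternating_cos_kernel m (real k * \<theta>) / 2" if "k \<in> {1..m}" for k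
  proof -
    have sin_pos: "sin (real k * \<theta>) > 0" and cos_pos: "cos (real k * \<theta>) > 0"
      using sin_cos_multiple_pi_div_odd_pos[of k m] that by (simp_all add: \<theta>_def)
    have "(2 * real m + 1) * (real k * \<theta>) = real k * pi"
      by (simp add: \<theta>_def)
    then have "cos (real k * \<theta>) * alternating_cos_kernel m (real k * \<theta>) = (-1)^m * (-1)^k"
      unfolding cos_mult_alternating_cos_kernel by (simp only: cos_npi)
    then have "alternating_cos_kernel m (real k * \<theta>) = (-1)^m * (-1)^k / cos (real k * \<theta>)"
      using cos_pos by (simp add: field_simps)
    moreover have "sin (real k * pi / (2 * real m + 1)) / sin (2 * real k * pi / (2 * real m + 1))
        = 1 / (2 * cos (real k * \<theta>))"
      using sin_pos sin_double[of "real k * \<theta>"] by (simp add: \<theta>_def mult.assoc)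
    moreover have "(-1::real)^(m+1) * (-1)^m = -1"
      by (induction m) auto
    ultimately show ?thesis
      by (simp add: field_simps)
  qed
  then have "(\<Sum>k=1..m. (-1::real)^(k+1) * (sin (real k * pi / (2 * real m + 1)) / sin (2 * real k * pi / (2 * real m + 1))))
      = (\<Sum>k=1..m. (-1)^(m+1) * alternating_cos_kernel m (real k * \<theta>) / 2)"
    by (rule sum.cong[OF refl])
  also have "\<dots> = (-1)^(m+1) * (real m + chi_o m) / 2"
    using sum_alternating_cos_kernel_multiples[of m]
    by (simp add: \<theta>_def sum_negf flip: sum_divide_distrib sum_distrib_left)
  also have "\<dots> = (-1)^(m+1) * (real m / 2) + chi_o m / 2"
    by (simp add: chi_o_def field_simps)
  finally show ?thesis .
qed

theorem theorem1:
  fixes n :: nat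
  assumes "n \<ge> 3" and "odd n"
  shows "(\<Sum>k=1..(n-1) div 2. (-1::real)^(k+1) * (sin (2*k*pi/n) / sin (k*pi/n))) = 1 \<and>
         (\<Sum>k=1..(n-1) div 2. (-1::real)^(k+1) * (sin (k*pi/n) / sin (2*k*pi/n)))
         = (-1)^((n+1) div 2) * ((real n - 1) / 4) + chi_o ((n-1) div 2) / 2"
proof -
  define m where "m = (n - 1) div 2"
  have "n = 2 * m + 1"
    using assms unfolding m_def by presburger
  then have "real n = 2 * real m + 1" "(n + 1) div 2 = m + 1" "m \<ge> 1"
    using assms by simp_all
  then show ?thesis
    using alternating_sum_sin_double_div_sin[of m] alternating_sum_sin_div_sin_double[of m]
    unfolding m_def[symmetric] by simp
qed

end
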